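(* Let $\mathcal{A}=\{1,\dots,N\}$, $\boldsymbol{\lambda}\in\mathbb{R}_+^N$, $\boldsymbol{\delta}\in\mathbb{R}^N$ with $\delta_i>0$, $B\in\mathbb{R}_+^{N\times N}$ with zero diagonal whose associated directed graph is weakly connected but not strongly connected, $\mathcal{S}\subset\mathbb{R}_+^N$ convex, and $q_i:\mathbb{R}_+\to(0,1]$ decreasing, strictly convex, continuously differentiable. For $\mathbf{s}\in\mathcal{S}$ and $\epsilon\ge0$ define $$\mathbf{g}^{\mathbf{s}}(\epsilon,\mathbf{p})=(\mathbf{1}-\mathbf{p})\circ(\boldsymbol{\lambda}+\epsilon\mathbf{1}+B\mathbf{p})-\mathbf{q}(\mathbf{s})^{-1}\circ\boldsymbol{\delta}\circ\mathbf{p},$$ so that $$\partial_{\mathbf{p}}\mathbf{g}^{\mathbf{s}}(\epsilon,\mathbf{p})=\mathrm{diag}(\mathbf{1}-\mathbf{p})B-\mathrm{diag}\big(\mathbf{q}(\mathbf{s})^{-1}\circ\boldsymbol{\delta}+\boldsymbol{\lambda}+\epsilon\mathbf{1}+B\mathbf{p}\big).$$ For $\epsilon>0$ let $\bar{\mathbf{p}}^\epsilon(\mathbf{s})>\mathbf{0}$ be the unique strictly positive solution of $\mathbf{g}^{\mathbf{s}}(\epsilon,\mathbf{p})=\mathbf{0}$. Then for every $\epsilon>0$, the matrix $-\partial_{\mathbf{p}}\mathbf{g}^{\mathbf{s}}(\epsilon,\bar{\mathbf{p}}^\epsilon(\mathbf{s}))$ is a nonsingular M-matrix.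
   Context: $\circ$ is the element-wise product; $\mathbf{q}(\mathbf{s})=(q_i(s_i))_i$, $\mathbf{q}(\mathbf{s})^{-1}$ its element-wise inverse; $\mathrm{diag}(\mathbf{x})$ is the diagonal matrix with diagonal $\mathbf{x}$. A Z-matrix is a square matrix with nonpositive off-diagonal and nonnegative diagonal entries; an M-matrix is a Z-matrix of the form $sI-C$ with $C$ entrywise nonnegative and $s\ge\rho(C)$ (spectral radius). The associated graph has an edge $(j,i)$ iff $b_{i,j}>0$. *)

theory Defs
  imports "Jordan_Normal_Form.Spectral_Radius"
begin

text \<open>Vertices are indexed 0..N-1 (paper: 1..N). The associated directed graph of B
  has an edge (j,i) iff B(i,j) > 0.\<close>

definition assoc_edges :: "nat \<Rightarrow> real mat \<Rightarrow> (nat \<times> nat) set" where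
  "assoc_edges N B = {(j, i). j < N \<and> i < N \<and> B $$ (i, j) > 0}"

definition strongly_connected_graph :: "nat \<Rightarrow> real mat \<Rightarrow> bool" where
  "strongly_connected_graph N B \<longleftrightarrow>
     (\<forall>i<N. \<forall>j<N. (i, j) \<in> (assoc_edges N B)\<^sup>*)"

definition weakly_connected_graph :: "nat \<Rightarrow> real mat \<Rightarrow> bool" where
  "weakly_connected_graph N B \<longleftrightarrow>
     (\<forall>i<N. \<forall>j<N. (i, j) \<in> (assoc_edges N B \<union> (assoc_edges N B)\<inverse>)\<^sup>*)"

definition convex_vec_set :: "real vec set \<Rightarrow> bool" where
  "convex_vec_set S \<longleftrightarrow>
     (\<forall>x\<in>S. \<forall>y\<in>S. \<forall>t::real. 0 \<le> t \<and> t \<le> 1 \<longrightarrow> t \<cdot>\<^sub>v x + (1 - t) \<cdot>\<^sub>v y \<in> S)"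

definition strictly_convex_on :: "real set \<Rightarrow> (real \<Rightarrow> real) \<Rightarrow> bool" where
  "strictly_convex_on A f \<longleftrightarrow>
     (\<forall>x\<in>A. \<forall>y\<in>A. \<forall>t::real. x \<noteq> y \<and> 0 < t \<and> t < 1 \<longrightarrow>
        f (t * x + (1 - t) * y) < t * f x + (1 - t) * f y)"

definition g_map :: "nat \<Rightarrow> real vec \<Rightarrow> real vec \<Rightarrow> real mat \<Rightarrow> (nat \<Rightarrow> real \<Rightarrow> real)
    \<Rightarrow> real vec \<Rightarrow> real \<Rightarrow> real vec \<Rightarrow> real vec" where
  "g_map N lam del B q s eps p = vec N (\<lambda>i.
     (1 - p $ i) * (lam $ i + eps + (B *\<^sub>v p) $ i) - del $ i / q i (s $ i) * p $ i)"

definition g_jac :: "nat \<Rightarrow> real vec \<Rightarrow> real vec \<Rightarrow> real mat \<Rightarrow> (nat \<Rightarrow> real \<Rightarrow> real)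
    \<Rightarrow> real vec \<Rightarrow> real \<Rightarrow> real vec \<Rightarrow> real mat" where
  "g_jac N lam del B q s eps p = mat N N (\<lambda>(i, j).
     (1 - p $ i) * B $$ (i, j)
     - (if i = j then del $ i / q i (s $ i) + lam $ i + eps + (B *\<^sub>v p) $ i else 0))"

definition nonneg_mat :: "real mat \<Rightarrow> bool" where
  "nonneg_mat C \<longleftrightarrow> (\<forall>i<dim_row C. \<forall>j<dim_col C. C $$ (i, j) \<ge> 0)"

definition M_matrix :: "nat \<Rightarrow> real mat \<Rightarrow> bool" where
  "M_matrix n A \<longleftrightarrow> (\<exists>s C. C \<in> carrier_mat n n \<and> nonneg_mat C \<and>
      s \<ge> spectral_radius (map_mat complex_of_real C) \<and> A = s \<cdot>\<^sub>m 1\<^sub>m n - C)"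

definition nonsingular_M_matrix :: "nat \<Rightarrow> real mat \<Rightarrow> bool" where
  "nonsingular_M_matrix n A \<longleftrightarrow> M_matrix n A \<and> det A \<noteq> 0"

end

theory Submission imports Defs begin

(* If a nonnegative matrix C maps a strictly positive vector p strictly below s p, comparing
   an eigenvector v with p at an index maximising |v i| / p i shows that every eigenvalue of C
   has modulus below s; hence s I - C is a nonsingular M-matrix, and so is every matrix with
   nonpositive off-diagonal entries that maps some positive vector to a positive vector.
   For the Jacobian J of g, the identity  J p = g(p) - (lambda + eps 1 + p o B p)  shows that
   -J pbar > 0 at the positive zero pbar, and g(pbar) = 0 forces pbar < 1, so the
   off-diagonal entries -(1 - pbar i) B i j are nonpositive. *)

lemma norm_eigenvalue_less_if_strictly_subinvariant:
  fixes C :: "real mat"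
  assumes C: "C \<in> carrier_mat n n" "nonneg_mat C"
    and p: "p \<in> carrier_vec n" "\<forall>i<n. p $ i > 0" "\<forall>i<n. (C *\<^sub>v p) $ i < s * p $ i"
    and ev: "eigenvalue (map_mat complex_of_real C) \<mu>"
  shows "cmod \<mu> < s"
proof -
  obtain v where v: "v \<in> carrier_vec n" "v \<noteq> 0\<^sub>v n"
      and Cv: "map_mat complex_of_real C *\<^sub>v v = \<mu> \<cdot>\<^sub>v v"
    using ev C(1) unfolding eigenvalue_def eigenvector_def by auto
  obtain k where k: "k < n" "v $ k \<noteq> 0"
    using v by (metis eq_vecI carrier_vecD index_zero_vec)
  have Cnn: "C $$ (i, j) \<ge> 0" if "i < n" "j < n" for i j
    using C that unfolding nonneg_mat_def by auto
  define ratio where "ratio j = cmod (v $ j) / p $ j" for j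
  define t where "t = Max (ratio ` {..<n})"
  obtain i where i: "i < n" "ratio i = t"
    using Max_in[of "ratio ` {..<n}"] k(1) unfolding t_def by fastforce
  have v_le: "cmod (v $ j) \<le> t * p $ j" if "j < n" for j
  proof -
    have "ratio j \<le> t" unfolding t_def using that by (intro Max_ge) auto
    thus ?thesis using p(2) that by (simp add: ratio_def divide_le_eq)
  qed
  have "0 < ratio k" using k p(2) by (simp add: ratio_def)
  also have "\<dots> \<le> t" unfolding t_def using k by (intro Max_ge) auto
  finally have t_pos: "t > 0" .
  have vi: "cmod (v $ i) = t * p $ i"
    using i p(2) by (auto simp: ratio_def divide_eq_eq)
  have "cmod \<mu> * cmod (v $ i) = cmod ((map_mat complex_of_real C *\<^sub>v v) $ i)"
    using Cv i v(1) by (simp add: norm_mult)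
  also have "\<dots> = cmod (\<Sum>j<n. complex_of_real (C $$ (i, j)) * v $ j)"
    using i v(1) C(1) by (simp add: scalar_prod_def lessThan_atLeast0)
  also have "\<dots> \<le> (\<Sum>j<n. C $$ (i, j) * cmod (v $ j))"
    using Cnn i by (auto intro!: order.trans[OF norm_sum] sum_mono simp: norm_mult)
  also have "\<dots> \<le> (\<Sum>j<n. C $$ (i, j) * (t * p $ j))"
    using Cnn i v_le by (intro sum_mono mult_left_mono) auto
  also have "\<dots> = t * (C *\<^sub>v p) $ i"
    using i p(1) C(1) by (simp add: scalar_prod_def lessThan_atLeast0 sum_distrib_left algebra_simps)
  also have "\<dots> < t * (s * p $ i)" using p(3) i t_pos by simp
  also have "\<dots> = s * cmod (v $ i)" using vi by simp
  finally have "cmod \<mu> * cmod (v $ i) < s * cmod (v $ i)" .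
  moreover have "cmod (v $ i) > 0" using vi t_pos p(2) i by simp
  ultimately show ?thesis by simp
qed

lemma spectral_radius_less_if_strictly_subinvariant:
  fixes C :: "real mat"
  assumes C: "C \<in> carrier_mat n n" "nonneg_mat C" and n: "n > 0"
    and p: "p \<in> carrier_vec n" "\<forall>i<n. p $ i > 0" "\<forall>i<n. (C *\<^sub>v p) $ i < s * p $ i"
  shows "spectral_radius (map_mat complex_of_real C) < s"
proof -
  have "map_mat complex_of_real C \<in> carrier_mat n n" using C(1) by simp
  from spectral_radius_mem_max(1)[OF this n] obtain \<mu>
    where "\<mu> \<in> spectrum (map_mat complex_of_real C)"
      and "spectral_radius (map_mat complex_of_real C) = cmod \<mu>"
    by auto
  thus ?thesis
    using norm_eigenvalue_less_if_strictly_subinvariant[OF C p] unfolding spectrum_def by simp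
qed

lemma det_shift_nonzero_if_strictly_subinvariant:
  fixes C :: "real mat"
  assumes C: "C \<in> carrier_mat n n" "nonneg_mat C"
    and p: "p \<in> carrier_vec n" "\<forall>i<n. p $ i > 0" "\<forall>i<n. (C *\<^sub>v p) $ i < s * p $ i"
  shows "det (s \<cdot>\<^sub>m 1\<^sub>m n - C) \<noteq> 0"
proof
  assume det0: "det (s \<cdot>\<^sub>m 1\<^sub>m n - C) = 0"
  have "s \<cdot>\<^sub>m 1\<^sub>m n - C \<in> carrier_mat n n" using C(1) by (intro minus_carrier_mat) auto
  moreover have "char_matrix C s = - (s \<cdot>\<^sub>m 1\<^sub>m n - C)"
    using C(1) by (auto simp: char_matrix_def)
  ultimately have "eigenvalue C s"
    using C(1) det0 by (simp add: eigenvalue_det det_0_negate)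
  from of_real_hom.eigenvalue_hom[OF C(1) this]
  have "cmod (complex_of_real s) < s"
    by (rule norm_eigenvalue_less_if_strictly_subinvariant[OF C p])
  thus False by simp
qed

lemma nonsingular_M_matrix_if_semipositive:
  fixes A :: "real mat"
  assumes A: "A \<in> carrier_mat n n" and n: "n > 0"
    and off_diag: "\<forall>i<n. \<forall>j<n. i \<noteq> j \<longrightarrow> A $$ (i, j) \<le> 0"
    and p: "p \<in> carrier_vec n" "\<forall>i<n. p $ i > 0" "\<forall>i<n. (A *\<^sub>v p) $ i > 0"
  shows "nonsingular_M_matrix n A"
proof -
  define s where "s = (\<Sum>i<n. \<bar>A $$ (i, i)\<bar>) + 1"
  have diag_less: "A $$ (i, i) < s" if "i < n" for i
  proof -
    have "\<bar>A $$ (i, i)\<bar> \<le> (\<Sum>i<n. \<bar>A $$ (i, i)\<bar>)"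
      using that by (intro member_le_sum) auto
    thus ?thesis unfolding s_def by linarith
  qed
  define C where "C = s \<cdot>\<^sub>m 1\<^sub>m n - A"
  have C_carrier: "C \<in> carrier_mat n n"
    unfolding C_def using A by (intro minus_carrier_mat) auto
  have "nonneg_mat C"
    unfolding nonneg_mat_def C_def using A off_diag diag_less
    by (auto simp: less_imp_le)
  moreover have "(C *\<^sub>v p) $ i < s * p $ i" if "i < n" for i
  proof -
    have "C *\<^sub>v p = s \<cdot>\<^sub>m 1\<^sub>m n *\<^sub>v p - A *\<^sub>v p"
      unfolding C_def using A p(1) by (intro minus_mult_distrib_mat_vec) auto
    hence "(C *\<^sub>v p) $ i = s * p $ i - (A *\<^sub>v p) $ i"
      using A p(1) that by simp
    thus ?thesis using p(3) that by simp
  qed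
  moreover have "A = s \<cdot>\<^sub>m 1\<^sub>m n - C"
    using A by (auto simp: C_def)
  ultimately show ?thesis
    unfolding nonsingular_M_matrix_def M_matrix_def
    using C_carrier p(1,2) n
      spectral_radius_less_if_strictly_subinvariant[of C n p s]
      det_shift_nonzero_if_strictly_subinvariant[of C n p s]
    by (metis less_imp_le)
qed

lemma g_jac_mult_vec:
  assumes B: "B \<in> carrier_mat N N" and p: "p \<in> carrier_vec N" and i: "i < N"
  shows "(g_jac N lam del B q s eps p *\<^sub>v p) $ i
           = g_map N lam del B q s eps p $ i - (lam $ i + eps + p $ i * (B *\<^sub>v p) $ i)"
proof -
  let ?d = "del $ i / q i (s $ i) + lam $ i + eps + (B *\<^sub>v p) $ i"
  have "(g_jac N lam del B q s eps p *\<^sub>v p) $ i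
          = (\<Sum>j<N. (1 - p $ i) * (B $$ (i, j) * p $ j) - (if j = i then ?d * p $ j else 0))"
    using B p i by (auto simp: g_jac_def scalar_prod_def lessThan_atLeast0 algebra_simps
        intro!: sum.cong)
  also have "\<dots> = (1 - p $ i) * (B *\<^sub>v p) $ i - ?d * p $ i"
    using B p i by (simp add: sum_subtractf sum_distrib_left scalar_prod_def lessThan_atLeast0)
  finally show ?thesis
    using i by (simp add: g_map_def algebra_simps)
qed

lemma neg_g_jac_mult_vec_if_g_map_zero:
  assumes "B \<in> carrier_mat N N" "p \<in> carrier_vec N" "g_map N lam del B q s eps p = 0\<^sub>v N"
    and i: "i < N"
  shows "(- g_jac N lam del B q s eps p *\<^sub>v p) $ i = lam $ i + eps + p $ i * (B *\<^sub>v p) $ i"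
proof -
  have "(- g_jac N lam del B q s eps p *\<^sub>v p) $ i = - (g_jac N lam del B q s eps p *\<^sub>v p) $ i"
    using assms by (simp add: g_jac_def)
  also have "\<dots> = lam $ i + eps + p $ i * (B *\<^sub>v p) $ i"
    using g_jac_mult_vec[OF assms(1,2) i] assms(3) i by simp
  finally show ?thesis .
qed

lemma less_one_if_g_map_zero:
  assumes zero: "g_map N lam del B q s eps p = 0\<^sub>v N" and i: "i < N"
    and pos: "p $ i > 0" "del $ i > 0" "q i (s $ i) > 0" "lam $ i + eps + (B *\<^sub>v p) $ i > 0"
  shows "p $ i < 1"
proof -
  have "(1 - p $ i) * (lam $ i + eps + (B *\<^sub>v p) $ i) = del $ i / q i (s $ i) * p $ i"
    using arg_cong[OF zero, of "\<lambda>v. v $ i"] i by (simp add: g_map_def)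
  also have "\<dots> > 0" using pos by simp
  finally show ?thesis using pos(4) by (simp add: zero_less_mult_iff)
qed

theorem lemma2:
  fixes N :: nat and lam del s pbar :: "real vec" and B :: "real mat"
    and S :: "real vec set" and q :: "nat \<Rightarrow> real \<Rightarrow> real" and eps :: real
  assumes lam: "lam \<in> carrier_vec N" "\<forall>i<N. lam $ i \<ge> 0"
    and del: "del \<in> carrier_vec N" "\<forall>i<N. del $ i > 0"
    and B: "B \<in> carrier_mat N N" "\<forall>i<N. \<forall>j<N. B $$ (i, j) \<ge> 0" "\<forall>i<N. B $$ (i, i) = 0"
    and weak: "weakly_connected_graph N B"
    and not_strong: "\<not> strongly_connected_graph N B"
    and S: "S \<subseteq> carrier_vec N" "\<forall>x\<in>S. \<forall>i<N. x $ i \<ge> 0" "convex_vec_set S"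
    and q_range: "\<forall>i<N. \<forall>x\<ge>0. 0 < q i x \<and> q i x \<le> 1"
    and q_decr: "\<forall>i<N. \<forall>x y. 0 \<le> x \<and> x \<le> y \<longrightarrow> q i y \<le> q i x"
    and q_sconv: "\<forall>i<N. strictly_convex_on {0..} (q i)"
    and q_C1: "\<forall>i<N. \<exists>q'. continuous_on {0..} q' \<and>
                 (\<forall>x\<ge>0. (q i has_real_derivative q' x) (at x within {0..}))"
    and s: "s \<in> S"
    and eps: "eps > 0"
    and pbar: "pbar \<in> carrier_vec N" "\<forall>i<N. pbar $ i > 0"
              "g_map N lam del B q s eps pbar = 0\<^sub>v N"
    and pbar_unique: "\<forall>p\<in>carrier_vec N. (\<forall>i<N. p $ i > 0) \<and> g_map N lam del B q s eps p = 0\<^sub>v N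
                          \<longrightarrow> p = pbar"
  shows "nonsingular_M_matrix N (- g_jac N lam del B q s eps pbar)"
proof (rule nonsingular_M_matrix_if_semipositive[OF _ _ _ pbar(1,2)])
  show "- g_jac N lam del B q s eps pbar \<in> carrier_mat N N"
    by (simp add: g_jac_def)
  show "N > 0"
    using not_strong by (auto simp: strongly_connected_graph_def)
  have Bp_nonneg: "(B *\<^sub>v pbar) $ i \<ge> 0" if "i < N" for i
    using B pbar that by (auto simp: scalar_prod_def less_imp_le intro!: sum_nonneg)
  have rate_pos: "lam $ i + eps + (B *\<^sub>v pbar) $ i > 0" if "i < N" for i
    using lam(2) eps Bp_nonneg[OF that] that by (simp add: add_nonneg_pos add_pos_nonneg)
  have "pbar $ i < 1" if "i < N" for i
    using less_one_if_g_map_zero[OF pbar(3) that] pbar(2) del(2) q_range S(2) s rate_pos that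
    by auto
  then show "\<forall>i<N. \<forall>j<N. i \<noteq> j \<longrightarrow> (- g_jac N lam del B q s eps pbar) $$ (i, j) \<le> 0"
    using B(2) by (fastforce simp: g_jac_def intro: mult_nonneg_nonneg)
  show "\<forall>i<N. (- g_jac N lam del B q s eps pbar *\<^sub>v pbar) $ i > 0"
    using neg_g_jac_mult_vec_if_g_map_zero[OF B(1) pbar(1,3)] lam(2) eps pbar(2) Bp_nonneg
    by (simp add: add_pos_nonneg add_nonneg_pos less_imp_le)
qed

end
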